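(* Let $a_\beta$ denote the unique maximizer of $T_0$ on $(0,\infty)$ (for $\beta>\beta_c$) and $q_\beta=a_\beta^{-2}$. Then $q_\beta=1+O(\beta^{-2})$ as $\beta\to\infty$.
   Context: $\Gamma_\beta=\frac{e^{-\beta}+e^{-3\beta/2}}{1-e^{-\beta/2}}$, $\beta_c$ the unique positive solution of $\Gamma_\beta=1$. $c_\beta=\frac{1+e^{-\beta/2}}{1-e^{-\beta/2}}$, $\mathcal L(h)=\log\sum_{k\in\mathbb Z}e^{hk}e^{-\beta|k|/2}/c_\beta$ for $|h|<\beta/2$. $\mathcal G(h)=\int_0^1\mathcal L(h(x-\frac12))dx$ for $h\in(-\beta,\beta)$, $\tilde h(q)$ the unique $h\in[0,\beta)$ with $\mathcal G'(h)=q$. $T_0(a)=a\log\Gamma_\beta+a\big(\mathcal G(\tilde h(a^{-2}))-a^{-2}\tilde h(a^{-2})\big)$ for $a>0$. *)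

theory Defs
  imports "HOL-Analysis.Analysis" "HOL-Library.Landau_Symbols"
begin

definition Gamma_beta :: "real \<Rightarrow> real" where
  "Gamma_beta \<beta> = (exp (-\<beta>) + exp (-3*\<beta>/2)) / (1 - exp (-\<beta>/2))"

definition beta_c :: real where
  "beta_c = (THE \<beta>. \<beta> > 0 \<and> Gamma_beta \<beta> = 1)"

definition c_beta :: "real \<Rightarrow> real" where
  "c_beta \<beta> = (1 + exp (-\<beta>/2)) / (1 - exp (-\<beta>/2))"

text \<open>L(h) = log (sum over k in Z of e^(hk) e^(-beta|k|/2) / c_beta), meaningful for |h| < beta/2.\<close>
definition LL :: "real \<Rightarrow> real \<Rightarrow> real" where
  "LL \<beta> h = ln ((\<Sum>\<^sub>\<infinity>k::int. exp (h * of_int k) * exp (-\<beta> * \<bar>of_int k\<bar> / 2)) / c_beta \<beta>)"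

definition GG :: "real \<Rightarrow> real \<Rightarrow> real" where
  "GG \<beta> h = integral {0..1} (\<lambda>x. LL \<beta> (h * (x - 1/2)))"

definition htilde :: "real \<Rightarrow> real \<Rightarrow> real" where
  "htilde \<beta> q = (THE h. 0 \<le> h \<and> h < \<beta> \<and> deriv (GG \<beta>) h = q)"

definition T0 :: "real \<Rightarrow> real \<Rightarrow> real" where
  "T0 \<beta> a = a * ln (Gamma_beta \<beta>)
     + a * (GG \<beta> (htilde \<beta> (a powr -2)) - a powr -2 * htilde \<beta> (a powr -2))"

definition a_beta :: "real \<Rightarrow> real" where
  "a_beta \<beta> = (THE a. a > 0 \<and> (\<forall>b>0. T0 \<beta> b \<le> T0 \<beta> a))"

definition q_beta :: "real \<Rightarrow> real" where
  "q_beta \<beta> = (a_beta \<beta>) powr -2"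

end

(* With t = exp (-beta/2), summing the geometric series gives
   L(u) = 2 ln (1 - t) - ln (1 - t e^u) - ln (1 - t e^-u).  Hence G is smooth and strictly
   convex on [0, beta), and integration by parts gives  h G'(h) + G(h) = L(h/2).
   Since G(htilde q) - q htilde q is the Legendre transform of G at q, for every h
   T0(a) <= a (ln Gamma + G(h)) - h / a, with equality when a^-2 = G'(h).  Taking h = h_beta with
   L(h_beta / 2) = -ln Gamma turns the bound into -h_beta (G'(h_beta) a + 1/a), which is
   uniquely maximized at a = G'(h_beta)^(-1/2), so q_beta = G'(h_beta).  The identity then reads
   h_beta (q_beta - 1) = (beta - h_beta) - ln ((1 + t) / (1 - t)) - G(h_beta), where
   beta - h_beta = O(t^2), the logarithm is O(t) and G(h_beta) = O(1/beta); as t <= 1/beta and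
   h_beta >= beta/2, q_beta - 1 = O(beta^-2). *)

theory Submission
  imports Defs
begin

section \<open>The closed form of L\<close>

text \<open>\<open>L_cf\<close> is the value of the two geometric series in \<open>LL\<close> (the two agree for
  \<open>\<bar>u\<bar> < \<beta>/2\<close>, see \<open>LL_eq_L_cf\<close>); unlike the infinite sum it can be differentiated
  directly.\<close>

definition t_beta :: "real \<Rightarrow> real" where
  "t_beta \<beta> = exp (-\<beta>/2)"

definition L_half :: "real \<Rightarrow> real \<Rightarrow> real" where
  "L_half \<beta> u = ln (1 - t_beta \<beta>) - ln (1 - t_beta \<beta> * exp u)"

definition L_half' :: "real \<Rightarrow> real \<Rightarrow> real" where
  "L_half' \<beta> u = t_beta \<beta> * exp u / (1 - t_beta \<beta> * exp u)"

definition L_cf :: "real \<Rightarrow> real \<Rightarrow> real" where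
  "L_cf \<beta> u = L_half \<beta> u + L_half \<beta> (-u)"

definition L_cf' :: "real \<Rightarrow> real \<Rightarrow> real" where
  "L_cf' \<beta> u = L_half' \<beta> u - L_half' \<beta> (-u)"

lemma t_beta_pos: "t_beta \<beta> > 0"
  by (simp add: t_beta_def)

lemma t_beta_less_1: "\<beta> > 0 \<Longrightarrow> t_beta \<beta> < 1"
  by (simp add: t_beta_def)

lemma t_beta_mult_exp: "t_beta \<beta> * exp u = exp (u - \<beta>/2)"
  by (simp add: t_beta_def exp_add[symmetric])

lemma t_beta_mult_exp_less_1: "u < \<beta>/2 \<Longrightarrow> t_beta \<beta> * exp u < 1"
  by (simp add: t_beta_mult_exp)

lemma has_sum_two_sided_geometric:
  fixes a b :: real
  assumes "0 \<le> a" "a < 1" "0 \<le> b" "b < 1"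
  shows "((\<lambda>k::int. if 0 \<le> k then a ^ nat k else b ^ nat (-k)) has_sum (1 / (1 - a) + b / (1 - b))) UNIV"
proof -
  let ?f = "\<lambda>k::int. if 0 \<le> k then a ^ nat k else b ^ nat (-k)"
  have "((\<lambda>n. a ^ n) has_sum (1 / (1 - a))) (UNIV :: nat set)"
    by (rule sums_nonneg_imp_has_sum) (use assms geometric_sums[of a] in auto)
  then have nonneg: "(?f has_sum (1 / (1 - a))) {k. 0 \<le> k}"
    by (subst has_sum_reindex_bij_witness[where j=nat and i=int and T=UNIV
          and h="\<lambda>n. a ^ n" and s'="1 / (1 - a)"]) auto
  have "((\<lambda>n. b * b ^ n) has_sum (b * (1 / (1 - b)))) (UNIV :: nat set)"
    by (rule sums_nonneg_imp_has_sum) (use assms sums_mult[OF geometric_sums[of b], of b] in auto)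
  then have neg: "(?f has_sum (b / (1 - b))) {k. k < 0}"
    by (subst has_sum_reindex_bij_witness[where j="\<lambda>k. nat (- k - 1)" and i="\<lambda>n. - int n - 1"
          and T=UNIV and h="\<lambda>n. b * b ^ n" and s'="b * (1 / (1 - b))"])
       (auto simp: nat_diff_distrib' simp flip: power_Suc)
  have "(?f has_sum (1 / (1 - a) + b / (1 - b))) ({k. 0 \<le> k} \<union> {k. k < 0})"
    by (rule has_sum_Un_disjoint[OF nonneg neg]) auto
  moreover have "{k::int. 0 \<le> k} \<union> {k. k < 0} = UNIV"
    by auto
  ultimately show ?thesis
    by simp
qed

lemma LL_eq_L_cf:
  assumes "\<beta> > 0" and u: "\<bar>u\<bar> < \<beta>/2"
  shows "LL \<beta> u = L_cf \<beta> u"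
proof -
  define t where "t = t_beta \<beta>"
  define a where "a = t * exp u"
  define b where "b = t * exp (-u)"
  have t: "0 < t" "t < 1"
    using assms by (auto simp: t_def t_beta_pos t_beta_less_1)
  have a: "0 < a" "a < 1" and b: "0 < b" "b < 1"
    using u by (auto simp: a_def b_def t_def t_beta_mult_exp)
  have term_eq: "exp (u * of_int k) * exp (-\<beta> * \<bar>of_int k\<bar> / 2)
      = (if 0 \<le> k then a ^ nat k else b ^ nat (-k))" for k :: int
  proof (cases "0 \<le> k")
    case True
    then have "exp (u * of_int k) * exp (-\<beta> * \<bar>of_int k\<bar> / 2) = exp (u - \<beta>/2) ^ nat k"
      by (simp add: exp_add[symmetric] flip: exp_of_nat_mult) (simp add: algebra_simps)
    then show ?thesis
      using True by (simp add: a_def t_def t_beta_mult_exp)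
  next
    case False
    then have "exp (u * of_int k) * exp (-\<beta> * \<bar>of_int k\<bar> / 2) = exp (-u - \<beta>/2) ^ nat (-k)"
      by (simp add: exp_add[symmetric] flip: exp_of_nat_mult) (simp add: algebra_simps)
    then show ?thesis
      using False by (simp add: b_def t_def t_beta_mult_exp)
  qed
  have sum: "(\<Sum>\<^sub>\<infinity>k::int. exp (u * of_int k) * exp (-\<beta> * \<bar>of_int k\<bar> / 2)) = 1 / (1 - a) + b / (1 - b)"
    unfolding term_eq using has_sum_two_sided_geometric[of a b] a b by (auto intro: infsumI)
  have "1 - a * b = (1 - t) * (1 + t)"
    by (simp add: a_def b_def exp_minus field_simps)
  then have "1 / (1 - a) + b / (1 - b) = (1 - t) * (1 + t) / ((1 - a) * (1 - b))"
    using a b by (simp add: field_simps)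
  moreover have "c_beta \<beta> = (1 + t) / (1 - t)"
    by (simp add: c_beta_def t_def t_beta_def)
  ultimately have "(1 / (1 - a) + b / (1 - b)) / c_beta \<beta> = (1 - t)\<^sup>2 / ((1 - a) * (1 - b))"
    using a b t by (simp add: power2_eq_square)
  then have "LL \<beta> u = ln ((1 - t)\<^sup>2 / ((1 - a) * (1 - b)))"
    unfolding LL_def sum by simp
  also have "\<dots> = L_cf \<beta> u"
    using a b t by (simp add: L_cf_def L_half_def ln_div ln_mult ln_realpow a_def b_def t_def)
  finally show ?thesis .
qed

lemma L_half_has_derivative:
  assumes "u < \<beta>/2"
  shows "(L_half \<beta> has_real_derivative L_half' \<beta> u) (at u)"
  using t_beta_mult_exp_less_1[OF assms]
  unfolding L_half_def[abs_def] L_half'_def by (auto intro!: derivative_eq_intros simp: field_simps)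

lemma L_cf_has_derivative:
  assumes "\<bar>u\<bar> < \<beta>/2"
  shows "(L_cf \<beta> has_real_derivative L_cf' \<beta> u) (at u)"
proof -
  have "((\<lambda>u. L_half \<beta> (-u)) has_real_derivative L_half' \<beta> (-u) * (-1)) (at u)"
    using assms by (intro DERIV_chain2[OF L_half_has_derivative] derivative_eq_intros) auto
  with L_half_has_derivative[of u \<beta>] assms
  have "((\<lambda>u. L_half \<beta> u + L_half \<beta> (-u)) has_real_derivative L_half' \<beta> u + L_half' \<beta> (-u) * (-1)) (at u)"
    by (intro DERIV_add) auto
  then show ?thesis
    by (simp add: L_cf_def[abs_def] L_cf'_def)
qed

lemma L_cf_minus [simp]: "L_cf \<beta> (-u) = L_cf \<beta> u"
  by (simp add: L_cf_def)

lemma L_cf_0 [simp]: "L_cf \<beta> 0 = 0"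
  by (simp add: L_cf_def L_half_def)

lemma L_cf'_0 [simp]: "L_cf' \<beta> 0 = 0"
  by (simp add: L_cf'_def)

lemma continuous_on_L_cf: "continuous_on {-\<beta>/2<..<\<beta>/2} (L_cf \<beta>)"
  by (intro continuous_at_imp_continuous_on ballI DERIV_isCont[OF L_cf_has_derivative]) auto

lemma continuous_on_L_cf': "continuous_on {-\<beta>/2<..<\<beta>/2} (L_cf' \<beta>)"
  unfolding L_cf'_def[abs_def] L_half'_def
  by (intro continuous_intros) (auto simp: t_beta_mult_exp)

lemma L_half'_strict_mono:
  assumes "u < v" "v < \<beta>/2"
  shows "L_half' \<beta> u < L_half' \<beta> v"
proof -
  have "t_beta \<beta> * exp u < t_beta \<beta> * exp v" "t_beta \<beta> * exp v < 1" "0 < t_beta \<beta> * exp u"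
    using assms t_beta_pos[of \<beta>] by (auto simp: t_beta_mult_exp)
  then show ?thesis
    unfolding L_half'_def by (simp add: divide_simps) (simp add: algebra_simps)
qed

lemma L_cf'_strict_mono:
  assumes "-\<beta>/2 < u" "u < v" "v < \<beta>/2"
  shows "L_cf' \<beta> u < L_cf' \<beta> v"
  using L_half'_strict_mono[of u v \<beta>] L_half'_strict_mono[of "-v" "-u" \<beta>] assms
  by (simp add: L_cf'_def)

lemma L_cf_nonneg:
  assumes "\<beta> > 0" "\<bar>u\<bar> < \<beta>/2"
  shows "L_cf \<beta> u \<ge> 0"
proof -
  define t where "t = t_beta \<beta>"
  define x where "x = exp u"
  have t: "0 < t" "t < 1" and x: "x > 0"
    using assms by (auto simp: t_def x_def t_beta_pos t_beta_less_1)
  have p1: "1 - t * x > 0" and p2: "1 - t / x > 0"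
    using t_beta_mult_exp_less_1[of u \<beta>] t_beta_mult_exp_less_1[of "-u" \<beta>] assms
    by (auto simp: t_def x_def exp_minus field_simps)
  have "x + 1/x \<ge> 2"
    using x sum_squares_ge_zero[of "x - 1" 0] by (simp add: field_simps power2_eq_square)
  then have "t * 2 \<le> t * (x + 1/x)"
    using t by (intro mult_left_mono) auto
  moreover have "(1 - t * x) * (1 - t / x) = 1 + t\<^sup>2 - t * (x + 1/x)"
    using x by (simp add: field_simps power2_eq_square)
  ultimately have "(1 - t * x) * (1 - t / x) \<le> (1 - t)\<^sup>2"
    by (simp add: power2_eq_square algebra_simps)
  then have "ln ((1 - t * x) * (1 - t / x)) \<le> ln ((1 - t)\<^sup>2)"
    using p1 p2 by (intro ln_mono) auto
  then have "ln (1 - t * x) + ln (1 - t / x) \<le> ln ((1 - t)\<^sup>2)"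
    using p1 p2 by (simp add: ln_mult_pos)
  then show ?thesis
    using t by (simp add: L_cf_def L_half_def ln_realpow t_def[symmetric] x_def[symmetric] exp_minus divide_inverse)
qed

lemma L_half_minus_bounds:
  assumes "\<beta> > 0" "0 \<le> u"
  shows "ln (1 - t_beta \<beta>) \<le> L_half \<beta> (-u)" "L_half \<beta> (-u) \<le> 0"
proof -
  define t where "t = t_beta \<beta>"
  have t: "0 < t" "t < 1"
    using assms by (auto simp: t_def t_beta_pos t_beta_less_1)
  have le: "t * exp (-u) \<le> t" and pos: "0 < t * exp (-u)"
    using assms t by (simp_all add: mult_left_le)
  then have lt1: "t * exp (-u) < 1"
    using t by linarith
  have "ln (1 - t) \<le> ln (1 - t * exp (-u))"
    using le t by (intro ln_mono) auto
  moreover have "ln (1 - t * exp (-u)) \<le> 0"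
    using pos lt1 by (subst ln_le_zero_iff) auto
  ultimately show "ln (1 - t_beta \<beta>) \<le> L_half \<beta> (-u)" "L_half \<beta> (-u) \<le> 0"
    by (auto simp: L_half_def t_def)
qed

lemma L_cf_upper:
  assumes "\<beta> > 0" "0 \<le> u"
  shows "L_cf \<beta> u \<le> - ln (1 - t_beta \<beta> * exp u)"
proof -
  have "ln (1 - t_beta \<beta>) \<le> 0"
    using assms t_beta_pos[of \<beta>] t_beta_less_1[of \<beta>] by (simp add: ln_le_zero_iff)
  then show ?thesis
    using L_half_minus_bounds[OF assms] by (simp add: L_cf_def L_half_def)
qed

lemma L_cf_lower:
  assumes "\<beta> > 0" "0 \<le> u"
  shows "2 * ln (1 - t_beta \<beta>) - ln (1 - t_beta \<beta> * exp u) \<le> L_cf \<beta> u"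
  using L_half_minus_bounds[OF assms] by (simp add: L_cf_def L_half_def)

lemma L_cf_unbounded:
  assumes "\<beta> > 0"
  obtains u where "0 \<le> u" "u < \<beta>/2" "L_cf \<beta> u > M"
proof -
  define t where "t = t_beta \<beta>"
  have t: "0 < t" "t < 1"
    using assms by (auto simp: t_def t_beta_pos t_beta_less_1)
  define \<delta> where "\<delta> = exp (2 * ln (1 - t) - max M 0 - 1)"
  have "ln (1 - t) \<le> 0"
    using t by (simp add: ln_le_zero_iff)
  then have "\<delta> \<le> exp (ln (1 - t))"
    unfolding \<delta>_def by simp
  then have \<delta>: "0 < \<delta>" "\<delta> \<le> 1 - t"
    using t by (simp_all add: \<delta>_def)
  define u where "u = ln ((1 - \<delta>) / t)"
  have tu: "t * exp u = 1 - \<delta>"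
    using \<delta> t by (simp add: u_def)
  have u0: "0 \<le> u"
    using \<delta> t by (simp add: u_def)
  have "exp (u - \<beta>/2) < 1"
    using tu \<delta> by (simp add: t_def t_beta_mult_exp)
  then have u1: "u < \<beta>/2"
    by simp
  have "2 * ln (1 - t) - ln \<delta> \<le> L_cf \<beta> u"
    using L_cf_lower[OF assms u0] tu by (simp add: t_def)
  moreover have "2 * ln (1 - t) - ln \<delta> = max M 0 + 1"
    by (simp add: \<delta>_def)
  ultimately have "L_cf \<beta> u > M"
    by linarith
  with u0 u1 show ?thesis
    using that by blast
qed

lemma L_cf_half_attains:
  assumes "\<beta> > 0" "M \<ge> 0"
  obtains h where "0 \<le> h" "h < \<beta>" "L_cf \<beta> (h/2) = M"
proof -
  obtain u where u: "0 \<le> u" "u < \<beta>/2" "L_cf \<beta> u > M"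
    using L_cf_unbounded[OF assms(1)] .
  have "isCont (\<lambda>h. L_cf \<beta> (h/2)) h" if "0 \<le> h" "h \<le> 2 * u" for h
  proof -
    have "isCont (\<lambda>h::real. h/2) h"
      by (intro continuous_intros) simp
    moreover have "isCont (L_cf \<beta>) (h/2)"
      using that u by (intro DERIV_isCont[OF L_cf_has_derivative]) auto
    ultimately show ?thesis
      by (rule isCont_o2)
  qed
  then have "\<forall>h. 0 \<le> h \<and> h \<le> 2 * u \<longrightarrow> isCont (\<lambda>h. L_cf \<beta> (h/2)) h"
    by blast
  then obtain h where "0 \<le> h" "h \<le> 2 * u" "L_cf \<beta> (h/2) = M"
    using IVT[of "\<lambda>h. L_cf \<beta> (h/2)" 0 M "2 * u"] u assms by auto
  then show ?thesis
    using that u by auto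
qed

section \<open>The closed form of G and its convexity\<close>

lemma abs_mult_centred_less:
  fixes h x :: real
  assumes "\<bar>h\<bar> < \<beta>" "x \<in> {0..1}"
  shows "\<bar>h * (x - 1/2)\<bar> < \<beta>/2"
proof -
  have "\<bar>x - 1/2\<bar> \<le> 1/2"
    using assms(2) unfolding abs_le_iff by auto
  then have "\<bar>h * (x - 1/2)\<bar> \<le> \<bar>h\<bar> * (1/2)"
    unfolding abs_mult by (intro mult_left_mono) auto
  then show ?thesis
    using assms(1) by simp
qed

lemma mult_centred_image_subset:
  fixes h :: real
  assumes "\<bar>h\<bar> < \<beta>"
  shows "(\<lambda>x. h * (x - 1/2)) ` {0..1} \<subseteq> {-\<beta>/2<..<\<beta>/2}"
  using abs_mult_centred_less[OF assms] by (force simp: abs_less_iff)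

definition G_cf :: "real \<Rightarrow> real \<Rightarrow> real" where
  "G_cf \<beta> h = integral {0..1} (\<lambda>x. L_cf \<beta> (h * (x - 1/2)))"

definition G_cf' :: "real \<Rightarrow> real \<Rightarrow> real" where
  "G_cf' \<beta> h = integral {0..1} (\<lambda>x. (x - 1/2) * L_cf' \<beta> (h * (x - 1/2)))"

lemma G_cf_0 [simp]: "G_cf \<beta> 0 = 0"
  by (simp add: G_cf_def)

lemma G_cf'_0 [simp]: "G_cf' \<beta> 0 = 0"
  by (simp add: G_cf'_def)

lemma GG_eq_G_cf:
  assumes "\<beta> > 0" "\<bar>h\<bar> < \<beta>"
  shows "GG \<beta> h = G_cf \<beta> h"
  unfolding GG_def G_cf_def
  by (rule integral_cong) (use LL_eq_L_cf abs_mult_centred_less assms in auto)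

lemma G_cf_has_integral:
  assumes "\<bar>h\<bar> < \<beta>"
  shows "((\<lambda>x. L_cf \<beta> (h * (x - 1/2))) has_integral G_cf \<beta> h) {0..1}"
proof -
  have "continuous_on {0..1} (\<lambda>x. L_cf \<beta> (h * (x - 1/2)))"
    by (rule continuous_on_compose2[OF continuous_on_L_cf _ mult_centred_image_subset[OF assms]])
       (auto intro!: continuous_intros)
  then show ?thesis
    unfolding G_cf_def by (intro integrable_integral integrable_continuous_interval)
qed

lemma G_cf_nonneg:
  assumes "\<beta> > 0" "\<bar>h\<bar> < \<beta>"
  shows "G_cf \<beta> h \<ge> 0"
  by (rule has_integral_nonneg[OF G_cf_has_integral[OF assms(2)]])
     (use L_cf_nonneg[OF assms(1)] abs_mult_centred_less[OF assms(2)] in auto)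

lemma continuous_on_L_cf'_param:
  "continuous_on ({-\<beta><..<\<beta>} \<times> cbox 0 1) (\<lambda>(h, x). (x - 1/2) * L_cf' \<beta> (h * (x - 1/2)))"
proof -
  have "(\<lambda>p. fst p * (snd p - 1/2)) ` ({-\<beta><..<\<beta>} \<times> cbox 0 1) \<subseteq> {-\<beta>/2<..<\<beta>/2}"
    using abs_mult_centred_less by (force simp: abs_less_iff)
  then have "continuous_on ({-\<beta><..<\<beta>} \<times> cbox 0 1)
      (\<lambda>p. (snd p - 1/2) * L_cf' \<beta> (fst p * (snd p - 1/2)))"
    by (intro continuous_intros continuous_on_compose2[OF continuous_on_L_cf'])
  then show ?thesis
    by (simp add: case_prod_beta')
qed

lemma continuous_on_L_cf'_centred:
  assumes "\<bar>h\<bar> < \<beta>"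
  shows "continuous_on {0..1} (\<lambda>x. (x - 1/2) * L_cf' \<beta> (h * (x - 1/2)))"
  by (intro continuous_intros continuous_on_compose2[OF continuous_on_L_cf' _ mult_centred_image_subset[OF assms]])
     (auto intro!: continuous_intros)

lemma G_cf'_has_integral:
  assumes "\<bar>h\<bar> < \<beta>"
  shows "((\<lambda>x. (x - 1/2) * L_cf' \<beta> (h * (x - 1/2))) has_integral G_cf' \<beta> h) {0..1}"
  unfolding G_cf'_def
  by (intro integrable_integral integrable_continuous_interval continuous_on_L_cf'_centred assms)

lemma G_cf_has_derivative:
  assumes "\<bar>h\<bar> < \<beta>"
  shows "(G_cf \<beta> has_real_derivative G_cf' \<beta> h) (at h)"
proof -
  have "((\<lambda>h. integral (cbox 0 1) (\<lambda>x. L_cf \<beta> (h * (x - 1/2)))) has_field_derivative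
        integral (cbox 0 1) (\<lambda>x. (x - 1/2) * L_cf' \<beta> (h * (x - 1/2)))) (at h within {-\<beta><..<\<beta>})"
  proof (rule leibniz_rule_field_derivative[where fx="\<lambda>h x. (x - 1/2) * L_cf' \<beta> (h * (x - 1/2))"])
    fix h x :: real
    assume "h \<in> {-\<beta><..<\<beta>}" "x \<in> cbox 0 1"
    then have "\<bar>h * (x - 1/2)\<bar> < \<beta>/2"
      by (intro abs_mult_centred_less) auto
    then have "((\<lambda>h. L_cf \<beta> (h * (x - 1/2))) has_field_derivative L_cf' \<beta> (h * (x - 1/2)) * (x - 1/2)) (at h)"
      by (intro DERIV_chain2[OF L_cf_has_derivative]) (auto intro!: derivative_eq_intros)
    then show "((\<lambda>h. L_cf \<beta> (h * (x - 1/2))) has_field_derivative (x - 1/2) * L_cf' \<beta> (h * (x - 1/2)))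
        (at h within {-\<beta><..<\<beta>})"
      by (simp add: mult.commute has_field_derivative_at_within)
  next
    fix h :: real
    assume "h \<in> {-\<beta><..<\<beta>}"
    then have "\<bar>h\<bar> < \<beta>"
      by auto
    then show "(\<lambda>x. L_cf \<beta> (h * (x - 1/2))) integrable_on cbox 0 1"
      using G_cf_has_integral by auto
  qed (use assms continuous_on_L_cf'_param in auto)
  moreover have "at h within {-\<beta><..<\<beta>} = at h"
    using assms by (intro at_within_open) auto
  ultimately show ?thesis
    unfolding G_cf_def G_cf'_def by simp
qed

lemma deriv_GG:
  assumes "\<beta> > 0" "\<bar>h\<bar> < \<beta>"
  shows "deriv (GG \<beta>) h = G_cf' \<beta> h"
proof (rule DERIV_imp_deriv)
  show "(GG \<beta> has_real_derivative G_cf' \<beta> h) (at h)"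
    by (rule has_field_derivative_transform_within_open[OF G_cf_has_derivative[OF assms(2)],
          where S="{-\<beta><..<\<beta>}"]) (use assms GG_eq_G_cf in auto)
qed

lemma isCont_G_cf':
  assumes "\<bar>h\<bar> < \<beta>"
  shows "isCont (G_cf' \<beta>) h"
proof -
  have "continuous_on {-\<beta><..<\<beta>} (G_cf' \<beta>)"
    unfolding G_cf'_def using integral_continuous_on_param[OF continuous_on_L_cf'_param] by simp
  then show ?thesis
    using assms by (auto simp: continuous_on_eq_continuous_at abs_less_iff)
qed

text \<open>Integrate the derivative of \<open>(x - 1/2) * L_cf \<beta> (h * (x - 1/2))\<close> over \<open>[0, 1]\<close>; as
  \<open>L_cf\<close> is even, the two boundary terms add up to \<open>L_cf \<beta> (h/2)\<close>.\<close>
lemma G_cf_identity: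
  assumes "\<bar>h\<bar> < \<beta>"
  shows "h * G_cf' \<beta> h + G_cf \<beta> h = L_cf \<beta> (h/2)"
proof -
  define F where "F x = (x - 1/2) * L_cf \<beta> (h * (x - 1/2))" for x
  define F' where "F' x = L_cf \<beta> (h * (x - 1/2)) + h * ((x - 1/2) * L_cf' \<beta> (h * (x - 1/2)))" for x
  have "(F has_real_derivative F' x) (at x)" if "x \<in> {0..1}" for x
  proof -
    have "((\<lambda>x. L_cf \<beta> (h * (x - 1/2))) has_real_derivative L_cf' \<beta> (h * (x - 1/2)) * h) (at x)"
      using abs_mult_centred_less[OF assms that]
      by (intro DERIV_chain2[OF L_cf_has_derivative]) (auto intro!: derivative_eq_intros)
    then show ?thesis
      unfolding F_def[abs_def] F'_def by (auto intro!: derivative_eq_intros simp: algebra_simps)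
  qed
  then have "(F' has_integral (F 1 - F 0)) {0..1}"
    by (intro fundamental_theorem_of_calculus)
       (auto simp: has_real_derivative_iff_has_vector_derivative[symmetric] has_field_derivative_at_within)
  moreover have "(F' has_integral (G_cf \<beta> h + h * G_cf' \<beta> h)) {0..1}"
    unfolding F'_def[abs_def]
    by (intro has_integral_add has_integral_mult_right G_cf_has_integral G_cf'_has_integral assms)
  moreover have "F 1 - F 0 = L_cf \<beta> (h/2)"
    using L_cf_minus[of \<beta> "h/2"] by (simp add: F_def)
  ultimately show ?thesis
    by (metis add.commute has_integral_unique)
qed

lemma G_cf'_strict_mono:
  assumes "0 \<le> h1" "h1 < h2" "h2 < \<beta>"
  shows "G_cf' \<beta> h1 < G_cf' \<beta> h2"
proof -
  define g where "g x = (x - 1/2) * L_cf' \<beta> (h2 * (x - 1/2)) - (x - 1/2) * L_cf' \<beta> (h1 * (x - 1/2))" for x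
  have h1: "\<bar>h1\<bar> < \<beta>" and h2: "\<bar>h2\<bar> < \<beta>"
    using assms by auto
  have g_integral: "(g has_integral (G_cf' \<beta> h2 - G_cf' \<beta> h1)) {0..1}"
    unfolding g_def[abs_def] by (intro has_integral_diff G_cf'_has_integral h1 h2)
  have g_pos: "g x > 0" if x: "x \<in> {0..1}" "x \<noteq> 1/2" for x
  proof -
    have range: "-\<beta>/2 < h1 * (x - 1/2)" "h1 * (x - 1/2) < \<beta>/2" "-\<beta>/2 < h2 * (x - 1/2)" "h2 * (x - 1/2) < \<beta>/2"
      using abs_mult_centred_less[OF h1 x(1)] abs_mult_centred_less[OF h2 x(1)] by (auto simp: abs_less_iff)
    consider "x > 1/2" | "x < 1/2"
      using x(2) by linarith
    then show ?thesis
    proof cases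
      case 1
      then have "h1 * (x - 1/2) < h2 * (x - 1/2)"
        using assms by (intro mult_strict_right_mono) auto
      then have "L_cf' \<beta> (h1 * (x - 1/2)) < L_cf' \<beta> (h2 * (x - 1/2))"
        using range by (intro L_cf'_strict_mono) auto
      then show ?thesis
        using 1 by (simp add: g_def flip: right_diff_distrib)
    next
      case 2
      then have "h2 * (x - 1/2) < h1 * (x - 1/2)"
        using assms by (intro mult_strict_right_mono_neg) auto
      then have "L_cf' \<beta> (h2 * (x - 1/2)) < L_cf' \<beta> (h1 * (x - 1/2))"
        using range by (intro L_cf'_strict_mono) auto
      then show ?thesis
        using 2 unfolding g_def right_diff_distrib[symmetric] by (intro mult_neg_neg) auto
    qed
  qed
  have g_nonneg: "g x \<ge> 0" if "x \<in> {0..1}" for x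
  proof (cases "x = 1/2")
    case True
    then show ?thesis
      unfolding g_def True by simp
  next
    case False
    then show ?thesis
      using g_pos[OF that] by simp
  qed
  have g_cont: "continuous_on (cbox 0 1) g"
    unfolding g_def[abs_def] using continuous_on_L_cf'_centred[OF h1] continuous_on_L_cf'_centred[OF h2]
    by (auto intro!: continuous_intros)
  have "g 1 = 0" if "G_cf' \<beta> h2 - G_cf' \<beta> h1 = 0"
    by (rule has_integral_0_cbox_imp_0[OF g_cont]) (use g_integral that g_nonneg in auto)
  then have "G_cf' \<beta> h2 - G_cf' \<beta> h1 \<noteq> 0"
    using g_pos[of 1] by auto
  moreover have "G_cf' \<beta> h2 - G_cf' \<beta> h1 \<ge> 0"
    by (rule has_integral_nonneg[OF g_integral g_nonneg])
  ultimately show ?thesis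
    by simp
qed

lemma mono_on_G_cf': "mono_on {0..<\<beta>} (G_cf' \<beta>)"
proof (rule mono_onI)
  fix h1 h2
  assume "h1 \<in> {0..<\<beta>}" "h2 \<in> {0..<\<beta>}" "h1 \<le> h2"
  then show "G_cf' \<beta> h1 \<le> G_cf' \<beta> h2"
    using G_cf'_strict_mono[of h1 h2 \<beta>] by (cases "h1 = h2") auto
qed

lemma mono_on_deriv_imp_above_tangent:
  fixes f f' :: "real \<Rightarrow> real"
  assumes C: "convex C"
    and f': "\<And>x. x \<in> C \<Longrightarrow> (f has_real_derivative f' x) (at x)"
    and mono: "mono_on C f'"
    and x: "x \<in> C" and y: "y \<in> C"
  shows "f' x * (y - x) \<le> f y - f x"
proof -
  have interval: "z \<in> C" if "a \<in> C" "b \<in> C" "a \<le> z" "z \<le> b" for a b z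
    using C that unfolding is_interval_convex_1[symmetric] is_interval_1 by blast
  consider "x < y" | "y < x" | "x = y"
    by linarith
  then show ?thesis
  proof cases
    case 1
    have "\<And>z. x \<le> z \<Longrightarrow> z \<le> y \<Longrightarrow> (f has_real_derivative f' z) (at z)"
      using f' interval[OF x y] by blast
    from MVT2[OF 1 this] obtain z where z: "x < z" "z < y" "f y - f x = (y - x) * f' z"
      by blast
    have "f' x \<le> f' z"
      using z interval[OF x y, of z] by (intro mono_onD[OF mono x]) auto
    then show ?thesis
      using z 1 by (simp add: mult.commute mult_left_mono)
  next
    case 2
    have "\<And>z. y \<le> z \<Longrightarrow> z \<le> x \<Longrightarrow> (f has_real_derivative f' z) (at z)"
      using f' interval[OF y x] by blast
    from MVT2[OF 2 this] obtain z where z: "y < z" "z < x" "f x - f y = (x - y) * f' z"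
      by blast
    have "f' z \<le> f' x"
      using z interval[OF y x, of z] by (intro mono_onD[OF mono _ x]) auto
    then have "(x - y) * f' z \<le> (x - y) * f' x"
      using 2 by (intro mult_left_mono) auto
    then show ?thesis
      using z by (simp add: algebra_simps)
  qed simp
qed

lemma G_cf_above_tangent:
  assumes "0 \<le> h0" "h0 < \<beta>" "0 \<le> h" "h < \<beta>"
  shows "G_cf \<beta> h0 + G_cf' \<beta> h0 * (h - h0) \<le> G_cf \<beta> h"
  using mono_on_deriv_imp_above_tangent[of "{0..<\<beta>}" "G_cf \<beta>" "G_cf' \<beta>" h0 h]
    G_cf_has_derivative mono_on_G_cf' assms by auto

lemma G_cf'_surj:
  assumes "\<beta> > 0" "q > 0"
  obtains h where "0 \<le> h" "h < \<beta>" "G_cf' \<beta> h = q"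
proof -
  have "\<exists>h1. 0 \<le> h1 \<and> h1 < \<beta> \<and> q \<le> G_cf' \<beta> h1"
  proof (rule ccontr)
    assume "\<nexists>h1. 0 \<le> h1 \<and> h1 < \<beta> \<and> q \<le> G_cf' \<beta> h1"
    then have less_q: "G_cf' \<beta> h < q" if "0 \<le> h" "h < \<beta>" for h
      using that by force
    obtain h where h: "0 \<le> h" "h < \<beta>" "L_cf \<beta> (h/2) = 2 * q * \<beta>"
      using L_cf_half_attains[of \<beta> "2 * q * \<beta>"] assms by auto
    have "h \<noteq> 0"
      using h assms by auto
    have "G_cf \<beta> h \<le> h * G_cf' \<beta> h"
      using G_cf_above_tangent[of h \<beta> 0] h by (simp add: algebra_simps)
    then have "L_cf \<beta> (h/2) \<le> 2 * (h * G_cf' \<beta> h)"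
      using G_cf_identity[of h \<beta>] h by simp
    also have "\<dots> < 2 * (h * q)"
      using less_q[OF h(1,2)] h \<open>h \<noteq> 0\<close> by simp
    also have "\<dots> \<le> 2 * q * \<beta>"
      using h assms by simp
    finally show False
      using h by simp
  qed
  then obtain h1 where h1: "0 \<le> h1" "h1 < \<beta>" "q \<le> G_cf' \<beta> h1"
    by blast
  have "\<forall>h. 0 \<le> h \<and> h \<le> h1 \<longrightarrow> isCont (G_cf' \<beta>) h"
    using h1 by (auto intro!: isCont_G_cf')
  then have "\<exists>h. 0 \<le> h \<and> h \<le> h1 \<and> G_cf' \<beta> h = q"
    using IVT[of "G_cf' \<beta>" 0 q h1] h1 assms by auto
  then show ?thesis
    using that h1 by force
qed

lemma htilde_G_cf':
  assumes "\<beta> > 0" "0 \<le> h" "h < \<beta>"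
  shows "htilde \<beta> (G_cf' \<beta> h) = h"
  unfolding htilde_def
proof (rule the1_equality)
  show "\<exists>!h'. 0 \<le> h' \<and> h' < \<beta> \<and> deriv (GG \<beta>) h' = G_cf' \<beta> h"
  proof (rule ex1I[of _ h])
    fix h'
    assume h': "0 \<le> h' \<and> h' < \<beta> \<and> deriv (GG \<beta>) h' = G_cf' \<beta> h"
    then have "G_cf' \<beta> h' = G_cf' \<beta> h"
      using deriv_GG[of \<beta> h'] assms by auto
    then show "h' = h"
      using G_cf'_strict_mono[of h' h \<beta>] G_cf'_strict_mono[of h h' \<beta>] h' assms
      by (cases h' h rule: linorder_cases) auto
  qed (use assms deriv_GG in auto)
qed (use assms deriv_GG in auto)

lemma htilde_in_range:
  assumes "\<beta> > 0" "q > 0"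
  shows "0 \<le> htilde \<beta> q" "htilde \<beta> q < \<beta>" "G_cf' \<beta> (htilde \<beta> q) = q"
proof -
  obtain h where "0 \<le> h" "h < \<beta>" "G_cf' \<beta> h = q"
    using G_cf'_surj[OF assms] .
  then show "0 \<le> htilde \<beta> q" "htilde \<beta> q < \<beta>" "G_cf' \<beta> (htilde \<beta> q) = q"
    using htilde_G_cf'[OF assms(1)] by auto
qed

section \<open>Legendre duality and the maximizer of T0\<close>

lemma mult_powr_minus_2:
  fixes c :: real
  assumes "c > 0"
  shows "c * c powr -2 = 1 / c"
  using assms by (simp add: powr_minus power2_eq_square divide_inverse)

text \<open>\<open>GG (htilde \<beta> q) - q * htilde \<beta> q\<close> is the Legendre transform of \<open>G\<close> at \<open>q\<close>, so any \<open>h\<close>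
  gives an upper bound on \<open>T0\<close>, attained when \<open>G' h = c powr -2\<close>.\<close>
lemma T0_le:
  assumes "\<beta> > 0" "0 \<le> h" "h < \<beta>" "c > 0"
  shows "T0 \<beta> c \<le> c * (ln (Gamma_beta \<beta>) + G_cf \<beta> h) - h / c"
proof -
  define q where "q = c powr -2"
  define hq where "hq = htilde \<beta> q"
  have hq: "0 \<le> hq" "hq < \<beta>" "G_cf' \<beta> hq = q"
    using htilde_in_range[OF assms(1), of q] assms(4) by (auto simp: hq_def q_def)
  have "G_cf \<beta> hq - q * hq \<le> G_cf \<beta> h - q * h"
    using G_cf_above_tangent[OF hq(1,2) assms(2,3)] hq(3) by (simp add: algebra_simps)
  then have "T0 \<beta> c \<le> c * ln (Gamma_beta \<beta>) + c * (G_cf \<beta> h - q * h)"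
    using GG_eq_G_cf[OF assms(1), of hq] hq assms(4)
    by (simp add: T0_def flip: q_def hq_def)
  also have "\<dots> = c * (ln (Gamma_beta \<beta>) + G_cf \<beta> h) - (c * q) * h"
    by (simp add: algebra_simps)
  also have "\<dots> = c * (ln (Gamma_beta \<beta>) + G_cf \<beta> h) - h / c"
    using mult_powr_minus_2[OF assms(4)] by (simp add: q_def)
  finally show ?thesis .
qed

lemma T0_eq:
  assumes "\<beta> > 0" "0 \<le> h" "h < \<beta>" "c > 0" "c powr -2 = G_cf' \<beta> h"
  shows "T0 \<beta> c = c * (ln (Gamma_beta \<beta>) + G_cf \<beta> h) - h / c"
proof -
  have "htilde \<beta> (c powr -2) = h"
    using htilde_G_cf'[OF assms(1-3)] assms(5) by simp
  then have "T0 \<beta> c = c * (ln (Gamma_beta \<beta>) + G_cf \<beta> h) - (c * c powr -2) * h"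
    using GG_eq_G_cf[OF assms(1), of h] assms by (simp add: T0_def algebra_simps)
  then show ?thesis
    using mult_powr_minus_2[OF assms(4)] by simp
qed

lemma two_sqrt_less_mult_add_inverse:
  fixes q c :: real
  assumes "q > 0" "c > 0" "c \<noteq> 1 / sqrt q"
  shows "2 * sqrt q < q * c + 1 / c"
proof -
  have "sqrt q * c \<noteq> 1"
    using assms by (auto simp: field_simps)
  then have "0 < (sqrt q * c - 1)\<^sup>2 / c"
    using assms(2) by simp
  also have "\<dots> = q * c + 1 / c - 2 * sqrt q"
    using assms(1,2) by (simp add: field_simps power2_eq_square)
  finally show ?thesis
    by simp
qed

lemma THE_maximizer_eqI:
  fixes g \<phi> :: "real \<Rightarrow> real"
  assumes "a > 0"
    and le: "\<And>c. c > 0 \<Longrightarrow> g c \<le> \<phi> c" and eq: "g a = \<phi> a"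
    and less: "\<And>c. c > 0 \<Longrightarrow> c \<noteq> a \<Longrightarrow> \<phi> c < \<phi> a"
  shows "(THE a. a > 0 \<and> (\<forall>b>0. g b \<le> g a)) = a"
proof (rule the_equality)
  have "g c \<le> g a" if "c > 0" for c
    using le[OF that] less[OF that] eq by (cases "c = a") auto
  then show "a > 0 \<and> (\<forall>c>0. g c \<le> g a)"
    using assms(1) by blast
next
  fix b
  assume b: "b > 0 \<and> (\<forall>c>0. g c \<le> g b)"
  show "b = a"
  proof (rule ccontr)
    assume "b \<noteq> a"
    then have "g b < g a"
      using le[of b] less[of b] eq b by force
    then show False
      using b assms(1) by force
  qed
qed

lemma q_beta_eq_G_cf':
  assumes "\<beta> > 0" "0 < h" "h < \<beta>" and key: "L_cf \<beta> (h/2) = - ln (Gamma_beta \<beta>)"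
  shows "q_beta \<beta> = G_cf' \<beta> h"
proof -
  define q where "q = G_cf' \<beta> h"
  define a where "a = 1 / sqrt q"
  have q: "q > 0"
    using G_cf'_strict_mono[of 0 h \<beta>] assms by (simp add: q_def)
  have a: "a > 0" "a powr -2 = q"
    using q by (simp_all add: a_def powr_minus power_divide)
  have sum: "ln (Gamma_beta \<beta>) + G_cf \<beta> h = - h * q"
    using G_cf_identity[of h \<beta>] assms by (simp add: q_def algebra_simps)
  define \<phi> where "\<phi> c = - h * (q * c + 1 / c)" for c
  have "a_beta \<beta> = a"
    unfolding a_beta_def
  proof (rule THE_maximizer_eqI[where \<phi>=\<phi>])
    show "T0 \<beta> c \<le> \<phi> c" if "c > 0" for c
      using T0_le[of \<beta> h c, unfolded sum] assms that by (simp add: \<phi>_def algebra_simps)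
    show "T0 \<beta> a = \<phi> a"
      using T0_eq[of \<beta> h a, unfolded sum] assms a by (simp add: \<phi>_def q_def algebra_simps)
    show "\<phi> c < \<phi> a" if "c > 0" "c \<noteq> a" for c
    proof -
      have "q * a + 1 / a = 2 * sqrt q"
        using q by (simp add: a_def field_simps real_sqrt_mult[symmetric] flip: power2_eq_square)
      then show ?thesis
        using two_sqrt_less_mult_add_inverse[OF q that(1)] that assms(2)
        by (simp add: \<phi>_def a_def)
    qed
  qed (use a in auto)
  then show ?thesis
    using a by (simp add: q_beta_def q_def)
qed

section \<open>Asymptotics of the maximizer\<close>

lemma le_exp_half:
  fixes x :: real
  shows "x \<le> exp (x/2)"
proof (cases "x \<ge> 0")
  case True
  have "x \<le> (1 + x/4)\<^sup>2"
    using sum_squares_ge_zero[of "x/4 - 1" 0] by (simp add: power2_eq_square algebra_simps)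
  also have "\<dots> \<le> (exp (x/4))\<^sup>2"
    using True exp_ge_add_one_self[of "x/4"] by (intro power_mono) auto
  also have "\<dots> = exp (x/2)"
    by (simp add: power2_eq_square flip: exp_add)
  finally show ?thesis .
next
  case False
  then show ?thesis
    using exp_gt_zero[of "x/2"] by linarith
qed

lemma t_beta_le_inverse: "\<beta> > 0 \<Longrightarrow> t_beta \<beta> \<le> 1 / \<beta>"
  using le_exp_half[of \<beta>] by (simp add: t_beta_def exp_minus field_simps)

lemma Gamma_beta_eq:
  assumes "\<beta> > 0"
  shows "Gamma_beta \<beta> = (t_beta \<beta>)\<^sup>2 * ((1 + t_beta \<beta>) / (1 - t_beta \<beta>))"
proof -
  define t where "t = t_beta \<beta>"
  have "exp (-\<beta>/2) = t" "exp (-\<beta>) = t\<^sup>2" "exp (-3*\<beta>/2) = t^3"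
    by (simp_all add: t_def t_beta_def power2_eq_square power3_eq_cube flip: exp_add)
  then have "Gamma_beta \<beta> = (t\<^sup>2 + t^3) / (1 - t)"
    by (simp add: Gamma_beta_def)
  then show ?thesis
    by (simp add: t_def power2_eq_square power3_eq_cube field_simps)
qed

lemma has_integral_inverse_sqrt_one_minus_exp:
  fixes s p :: real
  assumes "s \<noteq> 0" "p > 0" and less_1: "\<And>x. x \<in> {0..1} \<Longrightarrow> p * exp (s * x) < 1"
  shows "((\<lambda>x. 1 / sqrt (1 - p * exp (s * x))) has_integral
            2 * (artanh (sqrt (1 - p)) - artanh (sqrt (1 - p * exp s))) / s) {0..1}"
proof -
  define F where "F x = - 2 / s * artanh (sqrt (1 - p * exp (s * x)))" for x
  have "(F has_real_derivative 1 / sqrt (1 - p * exp (s * x))) (at x)" if "x \<in> {0..1}" for x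
  proof -
    define w where "w = 1 - p * exp (s * x)"
    have w: "0 < w" "w < 1"
      using less_1[OF that] assms(2) by (auto simp: w_def)
    have "\<bar>sqrt (1 - p * exp (s * x))\<bar> < 1"
      using w by (simp add: w_def real_sqrt_lt_1_iff)
    moreover have "((\<lambda>x. sqrt (1 - p * exp (s * x))) has_real_derivative
        inverse (sqrt w) / 2 * (- (p * (exp (s * x) * s)))) (at x)"
      using w by (auto intro!: derivative_eq_intros simp: w_def)
    ultimately have "((\<lambda>x. artanh (sqrt (1 - p * exp (s * x)))) has_real_derivative
        1 / (1 - (sqrt w)\<^sup>2) * (inverse (sqrt w) / 2 * (- (p * (exp (s * x) * s))))) (at x)"
      unfolding w_def by (rule DERIV_chain2[OF artanh_real_has_field_derivative])
    then have "(F has_real_derivative - 2 / s * (1 / (1 - (sqrt w)\<^sup>2) * (inverse (sqrt w) / 2 * (- (p * (exp (s * x) * s)))))) (at x)"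
      unfolding F_def[abs_def] by (rule DERIV_cmult)
    moreover have "- 2 / s * (1 / (1 - (sqrt w)\<^sup>2) * (inverse (sqrt w) / 2 * (- (p * (exp (s * x) * s)))))
        = 1 / sqrt (1 - p * exp (s * x))"
      using w assms(1,2) by (simp add: w_def field_simps)
    ultimately show ?thesis
      by (rule DERIV_cong)
  qed
  then have "((\<lambda>x. 1 / sqrt (1 - p * exp (s * x))) has_integral (F 1 - F 0)) {0..1}"
    by (intro fundamental_theorem_of_calculus)
       (auto simp: has_real_derivative_iff_has_vector_derivative[symmetric] has_field_derivative_at_within)
  moreover have "F 1 - F 0 = 2 * (artanh (sqrt (1 - p)) - artanh (sqrt (1 - p * exp s))) / s"
    using assms(1) by (simp add: F_def field_simps)
  ultimately show ?thesis
    by simp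
qed

lemma artanh_sqrt_one_minus_bounds:
  fixes p :: real
  assumes "0 < p" "p < 1"
  shows "0 \<le> artanh (sqrt (1 - p))" "2 * artanh (sqrt (1 - p)) \<le> 2 * ln 2 - ln p"
proof -
  define y where "y = sqrt (1 - p)"
  have y: "0 < y" "y < 1"
    using assms by (auto simp: y_def real_sqrt_lt_1_iff)
  have "(1 + y) * (1 - y) = p"
    using assms by (simp add: y_def algebra_simps flip: power2_eq_square)
  then have "ln (1 + y) + ln (1 - y) = ln p"
    using y by (simp flip: ln_mult_pos)
  moreover have "ln (1 - y) \<le> ln (1 + y)" "ln (1 + y) \<le> ln 2"
    using y by (auto intro: ln_mono)
  moreover have "2 * artanh y = ln (1 + y) - ln (1 - y)"
    using y by (simp add: artanh_def ln_div)
  ultimately show "0 \<le> artanh (sqrt (1 - p))" "2 * artanh (sqrt (1 - p)) \<le> 2 * ln 2 - ln p"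
    by (simp_all flip: y_def)
qed

lemma minus_ln_one_minus_le:
  fixes z :: real
  assumes "z < 1"
  shows "- ln (1 - z) \<le> 2 * (1 / sqrt (1 - z) - 1)"
proof -
  define y where "y = sqrt (1 - z)"
  have "y > 0"
    using assms by (simp add: y_def)
  then have "ln (1 / y) \<le> 1 / y - 1"
    by (intro ln_le_minus_one) auto
  moreover have "ln (1 - z) = 2 * ln y"
    using assms by (simp add: y_def ln_sqrt)
  ultimately show ?thesis
    using \<open>y > 0\<close> by (simp add: ln_div flip: y_def)
qed

lemma L_half_le:
  assumes "\<beta> > 0" "u < \<beta>/2"
  shows "L_half \<beta> u \<le> 2 * (1 / sqrt (1 - t_beta \<beta> * exp u) - 1)"
proof -
  have "ln (1 - t_beta \<beta>) \<le> 0"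
    using t_beta_pos[of \<beta>] t_beta_less_1[OF assms(1)] by (simp add: ln_le_zero_iff)
  then show ?thesis
    using minus_ln_one_minus_le[OF t_beta_mult_exp_less_1[OF assms(2)]] by (simp add: L_half_def)
qed

text \<open>Both halves of \<open>L_cf\<close> are bounded via \<open>-ln (1 - z) \<le> 2 / sqrt (1 - z) - 2\<close>, whose
  composition with \<open>z = t * exp u\<close> has an elementary antiderivative.\<close>
lemma G_cf_upper:
  assumes "\<beta> > 0" "0 < h" "h < \<beta>"
  shows "G_cf \<beta> h \<le> (8 * ln 2 + 2 * (\<beta> - h)) / h"
proof -
  define t where "t = t_beta \<beta>"
  define p where "p = t * exp (-h/2)"
  define r where "r = t * exp (h/2)"
  define A where "A = 2 * (artanh (sqrt (1 - p)) - artanh (sqrt (1 - r))) / h"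
  have p_eq: "p = exp (- \<beta>/2 - h/2)" and r_eq: "r = exp (h/2 - \<beta>/2)"
    by (simp_all add: p_def r_def t_def t_beta_mult_exp)
  have p: "0 < p" "p < 1" and r: "0 < r" "r < 1"
    using assms by (simp_all add: p_eq r_eq)
  have h: "\<bar>h\<bar> < \<beta>"
    using assms by simp
  have less_1: "t * exp (h * (x - 1/2)) < 1" "t * exp (- (h * (x - 1/2))) < 1" if "x \<in> {0..1}" for x
    using abs_mult_centred_less[OF h that] by (auto simp: t_def intro!: t_beta_mult_exp_less_1)
  have p_exp: "p * exp (h * x) = t * exp (h * (x - 1/2))" for x
    by (simp add: p_def mult.assoc algebra_simps flip: exp_add)
  have r_exp: "r * exp (- (h * x)) = t * exp (- (h * (x - 1/2)))" for x
    by (simp add: r_def mult.assoc algebra_simps flip: exp_add)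
  have "((\<lambda>x. 1 / sqrt (1 - p * exp (h * x))) has_integral
      2 * (artanh (sqrt (1 - p)) - artanh (sqrt (1 - p * exp h))) / h) {0..1}"
    using p less_1 assms by (intro has_integral_inverse_sqrt_one_minus_exp) (auto simp: p_exp)
  moreover have "p * exp h = r"
    unfolding p_eq r_eq exp_add[symmetric] by simp
  ultimately have I1: "((\<lambda>x. 1 / sqrt (1 - t * exp (h * (x - 1/2)))) has_integral A) {0..1}"
    by (simp add: A_def p_exp)
  have "((\<lambda>x. 1 / sqrt (1 - r * exp (- h * x))) has_integral
      2 * (artanh (sqrt (1 - r)) - artanh (sqrt (1 - r * exp (- h)))) / (- h)) {0..1}"
    using r less_1 assms by (intro has_integral_inverse_sqrt_one_minus_exp) (auto simp: r_exp)
  moreover have "r * exp (- h) = p"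
    unfolding p_eq r_eq exp_add[symmetric] by simp
  moreover have "2 * (artanh (sqrt (1 - r)) - artanh (sqrt (1 - p))) / (- h) = A"
    using assms(2) by (simp add: A_def field_simps)
  ultimately have I2: "((\<lambda>x. 1 / sqrt (1 - t * exp (- (h * (x - 1/2))))) has_integral A) {0..1}"
    by (simp add: r_exp)
  have "((\<lambda>x. 2 * (1 / sqrt (1 - t * exp (h * (x - 1/2))))
      + 2 * (1 / sqrt (1 - t * exp (- (h * (x - 1/2))))) - 4) has_integral 4 * A - 4) {0..1}"
    using has_integral_diff[OF has_integral_add[OF has_integral_mult_right[OF I1, of 2]
        has_integral_mult_right[OF I2, of 2]] has_integral_const_real[of "4::real" 0 1]]
    by simp
  moreover have "L_cf \<beta> (h * (x - 1/2)) \<le> 2 * (1 / sqrt (1 - t * exp (h * (x - 1/2))))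
      + 2 * (1 / sqrt (1 - t * exp (- (h * (x - 1/2))))) - 4" if "x \<in> {0..1}" for x
  proof -
    have "h * (x - 1/2) < \<beta>/2" "- (h * (x - 1/2)) < \<beta>/2"
      using abs_mult_centred_less[OF h that] by linarith+
    from L_half_le[OF assms(1) this(1)] L_half_le[OF assms(1) this(2)] show ?thesis
      by (simp add: L_cf_def t_def)
  qed
  ultimately have "G_cf \<beta> h \<le> 4 * A - 4"
    by (intro has_integral_le[OF G_cf_has_integral[OF h]])
  also have "\<dots> \<le> 4 * ((2 * ln 2 - ln p) / h) - 4"
    using artanh_sqrt_one_minus_bounds[OF p] artanh_sqrt_one_minus_bounds[OF r] assms
    unfolding A_def by (intro diff_right_mono mult_left_mono divide_right_mono) auto
  also have "\<dots> = (8 * ln 2 + 2 * (\<beta> - h)) / h"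
    using assms by (simp add: p_eq field_simps)
  finally show ?thesis .
qed

lemma L_cf_half_root:
  assumes "\<beta> > 0" "Gamma_beta \<beta> < 1"
  obtains h where "0 < h" "h < \<beta>" "L_cf \<beta> (h/2) = - ln (Gamma_beta \<beta>)"
proof -
  have "Gamma_beta \<beta> > 0"
    using t_beta_pos[of \<beta>] t_beta_less_1[OF assms(1)] by (simp add: Gamma_beta_eq[OF assms(1)])
  then have pos: "- ln (Gamma_beta \<beta>) > 0"
    using assms(2) by simp
  then obtain h where h: "0 \<le> h" "h < \<beta>" "L_cf \<beta> (h/2) = - ln (Gamma_beta \<beta>)"
    using L_cf_half_attains[OF assms(1), of "- ln (Gamma_beta \<beta>)"] by auto
  moreover have "h \<noteq> 0"
    using h pos by auto
  ultimately show ?thesis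
    by (intro that) auto
qed

lemma Gamma_beta_le:
  assumes "\<beta> > 0" "t_beta \<beta> \<le> 1/2"
  shows "Gamma_beta \<beta> \<le> 3 * (t_beta \<beta>)\<^sup>2"
proof -
  have "(1 + t_beta \<beta>) / (1 - t_beta \<beta>) \<le> 3"
    using assms(2) by (simp add: field_simps)
  then have "(t_beta \<beta>)\<^sup>2 * ((1 + t_beta \<beta>) / (1 - t_beta \<beta>)) \<le> (t_beta \<beta>)\<^sup>2 * 3"
    by (intro mult_left_mono) auto
  then show ?thesis
    unfolding Gamma_beta_eq[OF assms(1)] by linarith
qed

lemma t_beta_le_one_twelfth:
  assumes "\<beta> \<ge> 12"
  shows "t_beta \<beta> \<le> 1/12"
proof -
  have "1 / \<beta> \<le> 1 / 12"
    using assms by (intro divide_left_mono) auto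
  moreover have "t_beta \<beta> \<le> 1 / \<beta>"
    using assms by (intro t_beta_le_inverse) auto
  ultimately show ?thesis
    by linarith
qed

lemma beta_minus_root_le:
  assumes "\<beta> > 0" "0 \<le> h" "h < \<beta>" "L_cf \<beta> (h/2) = - ln (Gamma_beta \<beta>)"
    and small: "t_beta \<beta> \<le> 1/12"
  shows "\<beta> - h \<le> 24 * (t_beta \<beta>)\<^sup>2"
proof -
  define t where "t = t_beta \<beta>"
  define v where "v = t * exp (h/2)"
  have t: "0 < t" "t \<le> 1/12"
    using small t_beta_pos[of \<beta>] by (auto simp: t_def)
  moreover have "t * t \<le> t"
    using t by (intro mult_left_le) auto
  ultimately have t_sq: "t\<^sup>2 \<le> 1/12"
    unfolding power2_eq_square by linarith
  have v: "0 < v" "v < 1" "ln v = h/2 - \<beta>/2"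
    using assms(3) by (auto simp: v_def t_def t_beta_mult_exp)
  have Gamma: "0 < Gamma_beta \<beta>" "Gamma_beta \<beta> \<le> 3 * t\<^sup>2"
    using Gamma_beta_le[OF assms(1)] small t_beta_pos[of \<beta>] t_beta_less_1[OF assms(1)]
    by (auto simp: t_def Gamma_beta_eq[OF assms(1)])
  have "- ln (Gamma_beta \<beta>) \<le> - ln (1 - v)"
    using L_cf_upper[OF assms(1), of "h/2"] assms(2,4) by (simp add: v_def t_def)
  then have "1 - v \<le> Gamma_beta \<beta>"
    using v Gamma(1) by simp
  then have one_minus_v: "1 - v \<le> 3 * t\<^sup>2"
    using Gamma(2) by linarith
  have "\<beta> - h = 2 * ln (1 / v)"
    using v by (simp add: ln_div)
  also have "\<dots> \<le> 2 * ((1 - v) / v)"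
    using ln_le_minus_one[of "1 / v"] v by (simp add: field_simps)
  also have "\<dots> \<le> 2 * (4 * (1 - v))"
  proof -
    have "1/4 \<le> v"
      using one_minus_v t_sq by linarith
    then have "(1 - v) * 1 \<le> (1 - v) * (4 * v)"
      using v by (intro mult_left_mono) auto
    then have "(1 - v) / v \<le> 4 * (1 - v)"
      using v by (subst pos_divide_le_eq) (auto simp: algebra_simps)
    then show ?thesis
      by (intro mult_left_mono) auto
  qed
  finally show ?thesis
    using one_minus_v by (simp add: t_def)
qed

lemma abs_G_cf'_root_minus_1_le:
  assumes "\<beta> \<ge> 12" "0 < h" "h < \<beta>" and root: "L_cf \<beta> (h/2) = - ln (Gamma_beta \<beta>)"
  shows "\<bar>G_cf' \<beta> h - 1\<bar> \<le> 136 / \<beta>\<^sup>2"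
proof -
  define t where "t = t_beta \<beta>"
  define lc where "lc = ln ((1 + t) / (1 - t))"
  have "\<beta> > 0"
    using assms by simp
  have t: "0 < t" "t \<le> 1 / \<beta>" "t \<le> 1/12"
    using t_beta_pos[of \<beta>] t_beta_le_inverse[OF \<open>\<beta> > 0\<close>] t_beta_le_one_twelfth[OF assms(1)]
    by (simp_all add: t_def)
  have ratio: "1 \<le> (1 + t) / (1 - t)" "(1 + t) / (1 - t) - 1 \<le> 4 * t"
    using t by (simp_all add: field_simps)
  have lc: "0 \<le> lc" "lc \<le> 4 * t"
    using ratio ln_le_minus_one[of "(1 + t) / (1 - t)"] by (auto simp: lc_def)
  have "ln (t\<^sup>2) = - \<beta>"
    by (simp add: t_def t_beta_def ln_realpow)
  moreover have "ln (Gamma_beta \<beta>) = ln (t\<^sup>2) + lc"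
    unfolding Gamma_beta_eq[OF \<open>\<beta> > 0\<close>] t_def[symmetric] lc_def by (intro ln_mult_pos) (use t ratio in auto)
  ultimately have "ln (Gamma_beta \<beta>) = lc - \<beta>"
    by simp
  then have identity: "h * (G_cf' \<beta> h - 1) = (\<beta> - h) - lc - G_cf \<beta> h"
    using G_cf_identity[of h \<beta>] root assms by (simp add: algebra_simps)
  have gap: "\<beta> - h \<le> 24 * t\<^sup>2"
    using beta_minus_root_le[OF \<open>\<beta> > 0\<close> _ assms(3) root] assms(2) t by (simp add: t_def)
  moreover have "t * t \<le> (1/12) * t"
    using t by (intro mult_right_mono) auto
  ultimately have "\<beta> - h \<le> 2 * t" "h \<ge> \<beta>/2"
    using t assms(1) unfolding power2_eq_square by linarith+
  have "G_cf \<beta> h \<le> (8 * ln 2 + 2 * (\<beta> - h)) / h"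
    using G_cf_upper[OF \<open>\<beta> > 0\<close> assms(2,3)] .
  also have "\<dots> \<le> 20 / h"
    using ln_le_minus_one[of 2] \<open>\<beta> - h \<le> 2 * t\<close> t assms(2) by (intro divide_right_mono) auto
  also have "\<dots> \<le> 20 / (\<beta>/2)"
    using \<open>h \<ge> \<beta>/2\<close> \<open>\<beta> > 0\<close> by (intro divide_left_mono) auto
  finally have "G_cf \<beta> h \<le> 40 / \<beta>"
    by simp
  moreover have "0 \<le> G_cf \<beta> h"
    using G_cf_nonneg[OF \<open>\<beta> > 0\<close>, of h] assms(2,3) by simp
  ultimately have G: "0 \<le> G_cf \<beta> h" "G_cf \<beta> h \<le> 40 / \<beta>"
    by simp_all
  have "h * \<bar>G_cf' \<beta> h - 1\<bar> \<le> (\<beta> - h) + lc + G_cf \<beta> h"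
    using identity lc G assms(3) by (simp add: abs_mult[symmetric])
  also have "\<dots> \<le> 68 / \<beta>"
    using \<open>\<beta> - h \<le> 2 * t\<close> lc G t by (simp add: field_simps)
  finally have "\<bar>G_cf' \<beta> h - 1\<bar> \<le> 68 / \<beta> / h"
    using assms(2) by (subst pos_le_divide_eq) (auto simp: mult.commute)
  also have "\<dots> \<le> 68 / \<beta> / (\<beta>/2)"
    using \<open>h \<ge> \<beta>/2\<close> \<open>\<beta> > 0\<close> by (intro divide_left_mono) auto
  finally show ?thesis
    by (simp add: power2_eq_square)
qed

theorem proposition5p1:
  shows "(\<lambda>\<beta>. q_beta \<beta> - 1) \<in> O[at_top](\<lambda>\<beta>::real. 1 / \<beta>^2)"
proof (rule bigoI[where c=136])
  show "\<forall>\<^sub>F \<beta> in at_top. norm (q_beta \<beta> - 1) \<le> 136 * norm (1 / \<beta>^2)"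
  proof (rule eventually_at_top_linorderI[of 12])
    fix \<beta> :: real
    assume "\<beta> \<ge> 12"
    then have "\<beta> > 0" "t_beta \<beta> \<le> 1/12"
      using t_beta_le_one_twelfth by auto
    moreover have "t_beta \<beta> * t_beta \<beta> \<le> t_beta \<beta>"
      using \<open>t_beta \<beta> \<le> 1/12\<close> t_beta_pos[of \<beta>] by (intro mult_left_le) auto
    ultimately have "Gamma_beta \<beta> < 1"
      using Gamma_beta_le[of \<beta>] by (simp add: power2_eq_square)
    with \<open>\<beta> > 0\<close> obtain h where h: "0 < h" "h < \<beta>" "L_cf \<beta> (h/2) = - ln (Gamma_beta \<beta>)"
      by (rule L_cf_half_root)
    then have "q_beta \<beta> = G_cf' \<beta> h"
      using q_beta_eq_G_cf'[OF \<open>\<beta> > 0\<close>] by simp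
    then show "norm (q_beta \<beta> - 1) \<le> 136 * norm (1 / \<beta>^2)"
      using abs_G_cf'_root_minus_1_le[OF \<open>\<beta> \<ge> 12\<close> h] by simp
  qed
qed

end
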